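(* Let $M,K,N\ge 1$ be integers, let $\mathcal{S}\subseteq\{1,\dots,M\}$ be a fixed nonempty set of participating devices, and let $\sigma_h^2>0$, $\bar\beta>0$ and $\beta_m>0$ ($m\in\mathcal{S}$) be constants. For each $m\in\mathcal{S}$ let $\Delta\bm{\theta}_m=(\Delta\theta_m^1,\dots,\Delta\theta_m^{2N})\in\mathbb{R}^{2N}$ be a random vector with $\mathbb{E}\|\Delta\bm{\theta}_m\|_2^2<\infty$, and let $C_m=p_m c_m$ with $p_m>0$ and $c_m$ a (possibly random) positive integer; set $C=\sum_{m\in\mathcal{S}}C_m$. For $n\in\{1,\dots,N\}$ define the complex symbol $\Delta\theta_{m}^{s,cx,n}=C_m\big(\Delta\theta_m^{n}+j\,\Delta\theta_m^{n+N}\big)$. Let the channel coefficients be $h_{m,k}^n=\sqrt{\beta_m}\,g_{m,k}^n$ for $m\in\mathcal{S}$, $k\in\{1,\dots,K\}$, $n\in\{1,\dots,N\}$, where the $g_{m,k}^n$ are i.i.d. circularly symmetric complex Gaussian $\mathcal{CN}(0,\sigma_h^2)$ and the whole family $\{g_{m,k}^n\}$ is independent of $\{\Delta\bm{\theta}_m, c_m\}_{m\in\mathcal{S}}$. Define the interference term $$y^{n,int}=\frac{1}{K}\sum_{m\in\mathcal{S}}\sum_{\substack{m'\in\mathcal{S}\\ m'\neq m}}\sum_{k=1}^{K}\big(h_{m,k}^n\big)^{*}h_{m',k}^n\,\Delta\theta_{m'}^{s,cx,n},$$ and for $n\in\{1,\dots,N\}$ set $\Delta\hat\theta_{PS,2}^{n}=\frac{1}{C\sigma_h^2\bar\beta}\operatorname{Re}\{y^{n,int}\}$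 and $\Delta\hat\theta_{PS,2}^{n+N}=\frac{1}{C\sigma_h^2\bar\beta}\operatorname{Im}\{y^{n,int}\}$. Then $$\sum_{n=1}^{2N}\mathbb{E}\Big[\big(\Delta\hat\theta_{PS,2}^{n}\big)^2\Big]\le\sum_{m\in\mathcal{S}}\sum_{\substack{m'\in\mathcal{S}\\ m'\neq m}}\frac{\beta_m\beta_{m'}}{K\bar\beta^2}\,\mathbb{E}\big[\|\Delta\bm{\theta}_{m'}\|_2^2\big].$$
   Context: Setting: over-the-air federated learning with $M$ single-antenna energy-harvesting devices and a parameter server (PS) with $K$ antennas. $\mathcal{S}$ is the set of devices participating in the current global iteration; $\Delta\bm{\theta}_m$ is the local model difference of device $m$; $p_m$ is the fraction of data held by device $m$ and $c_m$ is its cooldown multiplier (number of iterations since its previous energy arrival), so the device transmits the scaled update $C_m\Delta\bm{\theta}_m$, grouping the first $N$ real coordinates as real parts and the last $N$ as imaginary parts of $N$ complex symbols. $\beta_m$ is the large-scale fading coefficient of device $m$, and $\bar\beta>0$ is a fixed normalization constant used by the PS. $j$ denotes the imaginary unit and $^{*}$ complex conjugation. *)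

theory Defs
  imports "HOL-Probability.Probability"
begin

definition cn_density :: "real \<Rightarrow> complex \<Rightarrow> ennreal" where
  "cn_density s2 z = ennreal (exp (- (cmod z)\<^sup>2 / s2) / (pi * s2))"

definition Ctot :: "nat set \<Rightarrow> (nat \<Rightarrow> real) \<Rightarrow> (nat \<Rightarrow> 'a \<Rightarrow> nat) \<Rightarrow> 'a \<Rightarrow> real" where
  "Ctot S p c \<omega> = (\<Sum>m\<in>S. p m * real (c m \<omega>))"

definition sym_cx :: "nat \<Rightarrow> (nat \<Rightarrow> real) \<Rightarrow> (nat \<Rightarrow> 'a \<Rightarrow> nat) \<Rightarrow> (nat \<Rightarrow> nat \<Rightarrow> 'a \<Rightarrow> real)
    \<Rightarrow> nat \<Rightarrow> nat \<Rightarrow> 'a \<Rightarrow> complex" where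
  "sym_cx N p c \<theta> m n \<omega> =
     complex_of_real (p m * real (c m \<omega>)) *
     (complex_of_real (\<theta> m n \<omega>) + \<i> * complex_of_real (\<theta> m (n + N) \<omega>))"

definition chan :: "(nat \<Rightarrow> real) \<Rightarrow> (nat \<Rightarrow> nat \<Rightarrow> nat \<Rightarrow> 'a \<Rightarrow> complex) \<Rightarrow> nat \<Rightarrow> nat \<Rightarrow> nat \<Rightarrow> 'a \<Rightarrow> complex" where
  "chan \<beta> g m k n \<omega> = complex_of_real (sqrt (\<beta> m)) * g m k n \<omega>"

definition y_int :: "nat set \<Rightarrow> nat \<Rightarrow> nat \<Rightarrow> (nat \<Rightarrow> real) \<Rightarrow> (nat \<Rightarrow> real) \<Rightarrow> (nat \<Rightarrow> 'a \<Rightarrow> nat)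
    \<Rightarrow> (nat \<Rightarrow> nat \<Rightarrow> 'a \<Rightarrow> real) \<Rightarrow> (nat \<Rightarrow> nat \<Rightarrow> nat \<Rightarrow> 'a \<Rightarrow> complex) \<Rightarrow> nat \<Rightarrow> 'a \<Rightarrow> complex" where
  "y_int S K N \<beta> p c \<theta> g n \<omega> =
     (1 / of_nat K) *
     (\<Sum>m\<in>S. \<Sum>m'\<in>S - {m}. \<Sum>k=1..K.
        cnj (chan \<beta> g m k n \<omega>) * chan \<beta> g m' k n \<omega> * sym_cx N p c \<theta> m' n \<omega>)"

definition est :: "nat set \<Rightarrow> nat \<Rightarrow> nat \<Rightarrow> real \<Rightarrow> real \<Rightarrow> (nat \<Rightarrow> real) \<Rightarrow> (nat \<Rightarrow> real)
    \<Rightarrow> (nat \<Rightarrow> 'a \<Rightarrow> nat) \<Rightarrow> (nat \<Rightarrow> nat \<Rightarrow> 'a \<Rightarrow> real) \<Rightarrow> (nat \<Rightarrow> nat \<Rightarrow> nat \<Rightarrow> 'a \<Rightarrow> complex)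
    \<Rightarrow> nat \<Rightarrow> 'a \<Rightarrow> real" where
  "est S K N s2 \<beta>bar \<beta> p c \<theta> g n \<omega> =
     (if n \<le> N then Re (y_int S K N \<beta> p c \<theta> g n \<omega>)
      else Im (y_int S K N \<beta> p c \<theta> g (n - N) \<omega>)) / (Ctot S p c \<omega> * s2 * \<beta>bar)"

end

theory Submission
  imports Defs
begin

text \<open>
  Divide the n-th interference symbol by C s2 betabar and call the result Y_n. It is a sum over
  q = (m, m', k) with m \<noteq> m' of W_q X_q, where the channel factor
  X_q = conj(g_{m,k}^n) g_{m',k}^n depends on the channels only and the weight W_q on the local
  updates and cooldowns only. As the channel gains are independent CN(0, s2) and m \<noteq> m',
  a fourth moment computation gives E[X_q conj(X_r)] = s2^2 if q = r and 0 otherwise, so the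
  independence of channels and data turns E|Y_n|^2 into s2^2 sum_q E|W_q|^2. Since C_{m'} \<le> C,
  |W_q|^2 is at most beta_m beta_{m'} / (K s2 betabar)^2 times
  (theta_{m'}^n)^2 + (theta_{m'}^{n+N})^2; summing over the K antennas and over n gives the bound,
  because Re Y_n and Im Y_n are the estimate components n and n + N.
\<close>

section \<open>Moments of the circularly symmetric complex Gaussian\<close>

lemma borel_measurable_cnj [measurable]: "cnj \<in> borel_measurable borel"
  by (intro borel_measurable_continuous_onI continuous_intros)

lemma has_bochner_integral_lborel_complex_Re_Im:
  fixes F1 F2 :: "real \<Rightarrow> complex"
  assumes F1: "has_bochner_integral lborel F1 a" and F2: "has_bochner_integral lborel F2 b"
  shows "has_bochner_integral (lborel :: complex measure) (\<lambda>z. F1 (Re z) * F2 (Im z)) (a * b)"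
proof -
  interpret product_sigma_finite "\<lambda>_::complex. (lborel :: real measure)" ..
  define F where "F u = (if u = 1 then F1 else F2)" for u :: complex
  have [measurable]: "F1 \<in> borel_measurable borel" "F2 \<in> borel_measurable borel"
    using F1 F2 by (auto dest: borel_measurable_has_bochner_integral)
  have F_integrable: "integrable lborel (F u)" for u
    using F1 F2 by (auto simp: F_def has_bochner_integral_iff)
  have "has_bochner_integral (\<Pi>\<^sub>M u\<in>Basis. lborel) (\<lambda>f. \<Prod>u\<in>Basis. F u (f u))
      (\<Prod>u\<in>Basis. integral\<^sup>L lborel (F u))"
    by (simp add: has_bochner_integral_iff product_integrable_prod product_integral_prod F_integrable)
  moreover have "(\<lambda>f. \<Prod>u\<in>Basis. F u (f u)) =
      (\<lambda>f. F1 (Re (\<Sum>u\<in>Basis. f u *\<^sub>R u)) * F2 (Im (\<Sum>u\<in>Basis. f u *\<^sub>R u)))"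
    by (auto simp: Basis_complex_def F_def fun_eq_iff)
  moreover have "(\<Prod>u\<in>Basis. integral\<^sup>L lborel (F u)) = a * b"
    using F1 F2 by (simp add: Basis_complex_def F_def has_bochner_integral_integral_eq)
  ultimately show ?thesis
    by (subst lborel_eq) (auto intro: has_bochner_integral_distr)
qed

lemma has_bochner_integral_complex_normal_moments:
  assumes "\<sigma> > 0"
  shows "has_bochner_integral lborel (\<lambda>x. complex_of_real (normal_density 0 \<sigma> x)) 1"
    and "has_bochner_integral lborel (\<lambda>x. complex_of_real (normal_density 0 \<sigma> x * x)) 0"
    and "has_bochner_integral lborel (\<lambda>x. complex_of_real (normal_density 0 \<sigma> x * x\<^sup>2)) (\<sigma>\<^sup>2)"
  using has_bochner_integral_of_real[OF normal_moment_even[OF assms, of 0 0]]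
    has_bochner_integral_of_real[OF normal_moment_odd[OF assms, of 0 0]]
    has_bochner_integral_of_real[OF normal_moment_even[OF assms, of 0 1]]
  by simp_all

lemma cn_density_eq_normal_density_Re_Im:
  assumes "\<sigma> > 0"
  shows "cn_density (2 * \<sigma>\<^sup>2) z = ennreal (normal_density 0 \<sigma> (Re z) * normal_density 0 \<sigma> (Im z))"
proof -
  have "normal_density 0 \<sigma> (Re z) * normal_density 0 \<sigma> (Im z)
      = exp (- (Re z)\<^sup>2 / (2 * \<sigma>\<^sup>2) + - (Im z)\<^sup>2 / (2 * \<sigma>\<^sup>2)) / (sqrt (2 * pi * \<sigma>\<^sup>2))\<^sup>2"
    unfolding normal_density_def exp_add by (simp add: power2_eq_square)
  also have "\<dots> = exp (- (cmod z)\<^sup>2 / (2 * \<sigma>\<^sup>2)) / (pi * (2 * \<sigma>\<^sup>2))"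
    by (simp add: cmod_power2 diff_divide_distrib mult.left_commute)
  finally show ?thesis
    by (simp add: cn_density_def)
qed

lemma has_bochner_integral_normal_Re_Im_moments:
  fixes \<sigma> :: real
  defines "\<nu> \<equiv> \<lambda>z. complex_of_real (normal_density 0 \<sigma> (Re z) * normal_density 0 \<sigma> (Im z))"
  assumes \<sigma>: "\<sigma> > 0"
  shows "has_bochner_integral lborel \<nu> 1"
    and "has_bochner_integral lborel (\<lambda>z. \<nu> z * z) 0"
    and "has_bochner_integral lborel (\<lambda>z. \<nu> z * z\<^sup>2) 0"
    and "has_bochner_integral lborel (\<lambda>z. \<nu> z * (z * cnj z)) (2 * \<sigma>\<^sup>2)"
proof -
  let ?m0 = "\<lambda>x. complex_of_real (normal_density 0 \<sigma> x)"
  let ?m1 = "\<lambda>x. complex_of_real (normal_density 0 \<sigma> x * x)"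
  let ?m2 = "\<lambda>x. complex_of_real (normal_density 0 \<sigma> x * x\<^sup>2)"
  note m = has_bochner_integral_complex_normal_moments[OF \<sigma>]
  note Re_Im = has_bochner_integral_lborel_complex_Re_Im
  note cong = has_bochner_integral_cong[THEN iffD1, OF refl]
  show "has_bochner_integral lborel \<nu> 1"
    using Re_Im[OF m(1) m(1)] by (simp add: \<nu>_def)
  have "has_bochner_integral lborel (\<lambda>z. ?m1 (Re z) * ?m0 (Im z) + ?m0 (Re z) * (\<i> * ?m1 (Im z)))
      (0 * 1 + 1 * (\<i> * 0))"
    by (intro has_bochner_integral_add Re_Im has_bochner_integral_mult_right m)
  from cong[OF _ _ this] show "has_bochner_integral lborel (\<lambda>z. \<nu> z * z) 0"
    by (simp_all add: \<nu>_def complex_eq_iff)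
  have "has_bochner_integral lborel
      (\<lambda>z. ?m2 (Re z) * ?m0 (Im z) - ?m0 (Re z) * ?m2 (Im z) + (2 * \<i> * ?m1 (Re z)) * ?m1 (Im z))
      (complex_of_real (\<sigma>\<^sup>2) * 1 - 1 * complex_of_real (\<sigma>\<^sup>2) + (2 * \<i> * 0) * 0)"
    by (intro has_bochner_integral_add has_bochner_integral_diff Re_Im has_bochner_integral_mult_right m)
  from cong[OF _ _ this] show "has_bochner_integral lborel (\<lambda>z. \<nu> z * z\<^sup>2) 0"
    by (simp_all add: \<nu>_def complex_eq_iff algebra_simps power2_eq_square)
  have "has_bochner_integral lborel (\<lambda>z. ?m2 (Re z) * ?m0 (Im z) + ?m0 (Re z) * ?m2 (Im z))
      (complex_of_real (\<sigma>\<^sup>2) * 1 + 1 * complex_of_real (\<sigma>\<^sup>2))"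
    by (intro has_bochner_integral_add Re_Im m)
  from cong[OF _ _ this] show "has_bochner_integral lborel (\<lambda>z. \<nu> z * (z * cnj z)) (2 * \<sigma>\<^sup>2)"
    by (simp_all add: \<nu>_def complex_eq_iff algebra_simps power2_eq_square)
qed

lemma has_bochner_integral_cn_monomial:
  fixes p q :: nat
  assumes "s > 0" "p + q \<le> 2"
  shows "has_bochner_integral (density lborel (cn_density s)) (\<lambda>z. z ^ p * cnj z ^ q)
           (if p = q then complex_of_real s ^ p else 0)"
proof -
  define \<sigma> where "\<sigma> = sqrt (s / 2)"
  have \<sigma>: "\<sigma> > 0" and s: "s = 2 * \<sigma>\<^sup>2"
    using \<open>s > 0\<close> by (simp_all add: \<sigma>_def)
  note moments = has_bochner_integral_normal_Re_Im_moments[OF \<sigma>]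
  have le: "has_bochner_integral (density lborel (cn_density s)) (\<lambda>z. z ^ p * cnj z ^ q)
      (if p = q then complex_of_real s ^ p else 0)" if "q \<le> p" "p + q \<le> 2" for p q :: nat
  proof -
    have "p = 0 \<and> q = 0 \<or> p = 1 \<and> q = 0 \<or> p = 2 \<and> q = 0 \<or> p = 1 \<and> q = 1"
      using that by auto
    then have "has_bochner_integral lborel
        (\<lambda>z. complex_of_real (normal_density 0 \<sigma> (Re z) * normal_density 0 \<sigma> (Im z)) * (z ^ p * cnj z ^ q))
        (if p = q then complex_of_real s ^ p else 0)"
      using moments by (elim disjE conjE) (simp_all add: s)
    then show ?thesis
      unfolding s cn_density_eq_normal_density_Re_Im[OF \<sigma>]
      by (intro has_bochner_integral_density, measurable) (simp_all add: scaleR_conv_of_real)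
  qed
  show ?thesis
  proof (cases "q \<le> p")
    case True
    then show ?thesis
      using le assms(2) by blast
  next
    case False
    have "has_bochner_integral (density lborel (cn_density s)) (\<lambda>z. cnj (z ^ q * cnj z ^ p))
        (cnj (if q = p then complex_of_real s ^ q else 0))"
      using False assms(2) by (intro has_bochner_integral_cnj le) auto
    then show ?thesis
      using False by (simp add: mult.commute)
  qed
qed

lemma has_bochner_integral_distributed:
  fixes h :: "'b \<Rightarrow> 'c::{banach, second_countable_topology}"
  assumes D: "distributed M N X f" and h: "h \<in> borel_measurable N"
    and "has_bochner_integral (density N f) h v"
  shows "has_bochner_integral M (\<lambda>\<omega>. h (X \<omega>)) v"
proof -
  have X: "X \<in> measurable M N"
    using D by (rule distributed_measurable)
  have "has_bochner_integral (distr M N X) h v"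
    using assms(3) by (simp add: distributed_distr_eq_density[OF D])
  then show ?thesis
    by (simp add: has_bochner_integral_iff integrable_distr_eq[OF X h] integral_distr[OF X h])
qed

lemma has_bochner_integral_cn_moment:
  fixes p q :: nat
  assumes "distributed M lborel Z (cn_density s)" "s > 0" "p + q \<le> 2"
  shows "has_bochner_integral M (\<lambda>\<omega>. Z \<omega> ^ p * cnj (Z \<omega>) ^ q)
           (if p = q then complex_of_real s ^ p else 0)"
  using assms(1) _ has_bochner_integral_cn_monomial[OF assms(2,3)]
  by (rule has_bochner_integral_distributed) measurable

lemma prod_power_of_bool_eq:
  fixes f :: "'i \<Rightarrow> 'b::comm_monoid_mult"
  assumes "finite J" "x \<in> J"
  shows "(\<Prod>i\<in>J. f i ^ of_bool (i = x)) = f x"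
proof -
  have "(\<Prod>i\<in>J. f i ^ of_bool (i = x)) = (\<Prod>i\<in>J. if i = x then f i else 1)"
    by (rule prod.cong) auto
  then show ?thesis
    using assms by simp
qed

lemma prod_occurrence_powers:
  fixes z :: "'i \<Rightarrow> complex"
  assumes "finite J" "a \<in> J" "b \<in> J" "c \<in> J" "d \<in> J"
  shows "(\<Prod>i\<in>J. z i ^ (of_bool (i = b) + of_bool (i = c)) * cnj (z i) ^ (of_bool (i = a) + of_bool (i = d))) =
    cnj (z a) * z b * cnj (cnj (z c) * z d)"
proof -
  have "(\<Prod>i\<in>J. z i ^ (of_bool (i = b) + of_bool (i = c)) * cnj (z i) ^ (of_bool (i = a) + of_bool (i = d))) =
      (\<Prod>i\<in>J. z i ^ of_bool (i = b)) * (\<Prod>i\<in>J. z i ^ of_bool (i = c)) *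
      ((\<Prod>i\<in>J. cnj (z i) ^ of_bool (i = a)) * (\<Prod>i\<in>J. cnj (z i) ^ of_bool (i = d)))"
    unfolding power_add prod.distrib by (simp only: mult_ac)
  also have "\<dots> = z b * z c * (cnj (z a) * cnj (z d))"
    using assms by (simp add: prod_power_of_bool_eq)
  finally show ?thesis
    by (simp add: mult_ac)
qed

lemma (in prob_space) has_bochner_integral_indep_vars_prod:
  fixes X :: "'i \<Rightarrow> 'a \<Rightarrow> 'b::{real_normed_field, banach, second_countable_topology}"
  assumes "finite I" "indep_vars (\<lambda>_. borel) X I" "\<And>i. i \<in> I \<Longrightarrow> has_bochner_integral M (X i) (x i)"
  shows "has_bochner_integral M (\<lambda>\<omega>. \<Prod>i\<in>I. X i \<omega>) (\<Prod>i\<in>I. x i)"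
  using assms indep_vars_integrable[OF assms(1,2)] indep_vars_lebesgue_integral[OF assms(1,2)]
  by (simp add: has_bochner_integral_iff)

lemma (in prob_space) has_bochner_integral_indep_cn_cross_moment:
  fixes Z :: "'i \<Rightarrow> 'a \<Rightarrow> complex"
  assumes indep: "indep_vars (\<lambda>_. borel) Z I"
    and cn: "\<And>i. i \<in> I \<Longrightarrow> distributed M lborel (Z i) (cn_density s)" and "s > 0"
    and I: "a \<in> I" "b \<in> I" "c \<in> I" "d \<in> I" and "a \<noteq> b" "c \<noteq> d"
  shows "has_bochner_integral M (\<lambda>\<omega>. cnj (Z a \<omega>) * Z b \<omega> * cnj (cnj (Z c \<omega>) * Z d \<omega>))
           (if a = c \<and> b = d then complex_of_real s ^ 2 else 0)"
proof -
  define J where "J = {a, b, c, d}"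
  \<comment> \<open>grouping equal indices turns the product into one of independent monomials\<close>
  define e :: "'i \<Rightarrow> nat" where "e i = of_bool (i = b) + of_bool (i = c)" for i
  define f :: "'i \<Rightarrow> nat" where "f i = of_bool (i = a) + of_bool (i = d)" for i
  define F where "F i \<omega> = Z i \<omega> ^ e i * cnj (Z i \<omega>) ^ f i" for i \<omega>
  have J: "finite J" "J \<subseteq> I"
    using I by (auto simp: J_def)
  have "(\<Prod>i\<in>J. F i \<omega>) = cnj (Z a \<omega>) * Z b \<omega> * cnj (cnj (Z c \<omega>) * Z d \<omega>)" for \<omega>
    unfolding F_def e_def f_def J_def by (rule prod_occurrence_powers) auto
  moreover have "has_bochner_integral M (\<lambda>\<omega>. \<Prod>i\<in>J. F i \<omega>)
      (\<Prod>i\<in>J. if e i = f i then complex_of_real s ^ e i else 0)"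
  proof (rule has_bochner_integral_indep_vars_prod)
    show "indep_vars (\<lambda>_. borel) F J"
      unfolding F_def
      by (rule indep_vars_compose2[OF indep_vars_subset[OF indep J(2)]]) measurable
    show "has_bochner_integral M (F i) (if e i = f i then complex_of_real s ^ e i else 0)"
      if "i \<in> J" for i
      unfolding F_def using that J(2) \<open>a \<noteq> b\<close> \<open>c \<noteq> d\<close> \<open>s > 0\<close>
      by (intro has_bochner_integral_cn_moment cn) (auto simp: e_def f_def)
  qed (use J in auto)
  moreover have "(\<Prod>i\<in>J. if e i = f i then complex_of_real s ^ e i else 0) =
      (if a = c \<and> b = d then complex_of_real s ^ 2 else 0)"
  proof (cases "a = c \<and> b = d")
    case True
    then have "J = {a, b}"
      by (auto simp: J_def)
    then show ?thesis
      using True \<open>a \<noteq> b\<close> by (simp add: e_def f_def power2_eq_square)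
  next
    case False
    then have "\<exists>i\<in>J. e i \<noteq> f i"
      using \<open>a \<noteq> b\<close> \<open>c \<noteq> d\<close> by (cases "a = c") (auto simp: J_def e_def f_def)
    then show ?thesis
      using False J(1) by (auto simp: prod_zero_iff)
  qed
  ultimately show ?thesis
    by simp
qed

section \<open>Independence and orthogonal expansions\<close>

lemma integrable_mult_cnj_square_integrable:
  fixes f g :: "'a \<Rightarrow> complex"
  assumes "f \<in> borel_measurable M" "g \<in> borel_measurable M"
    and "integrable M (\<lambda>x. (cmod (f x))\<^sup>2)" "integrable M (\<lambda>x. (cmod (g x))\<^sup>2)"
  shows "integrable M (\<lambda>x. f x * cnj (g x))"
proof (rule Bochner_Integration.integrable_bound)
  show "integrable M (\<lambda>x. (cmod (f x))\<^sup>2 + (cmod (g x))\<^sup>2)"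
    using assms(3,4) by (rule Bochner_Integration.integrable_add)
  show "(\<lambda>x. f x * cnj (g x)) \<in> borel_measurable M"
    using assms(1,2) by measurable
  show "AE x in M. norm (f x * cnj (g x)) \<le> norm ((cmod (f x))\<^sup>2 + (cmod (g x))\<^sup>2)"
  proof (rule AE_I2)
    fix x
    have "0 \<le> cmod (f x) * cmod (g x)"
      by simp
    then have "cmod (f x) * cmod (g x) \<le> (cmod (f x))\<^sup>2 + (cmod (g x))\<^sup>2"
      using sum_squares_bound[of "cmod (f x)" "cmod (g x)"] by linarith
    then show "norm (f x * cnj (g x)) \<le> norm ((cmod (f x))\<^sup>2 + (cmod (g x))\<^sup>2)"
      by (simp add: norm_mult)
  qed
qed

lemma (in prob_space) has_bochner_integral_square_norm_indep_orthogonal_sum: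
  fixes X W :: "'q \<Rightarrow> 'a \<Rightarrow> complex"
  assumes "finite Q"
    and indep: "\<And>q r. q \<in> Q \<Longrightarrow> r \<in> Q \<Longrightarrow>
      indep_var borel (\<lambda>\<omega>. X q \<omega> * cnj (X r \<omega>)) borel (\<lambda>\<omega>. W q \<omega> * cnj (W r \<omega>))"
    and X: "\<And>q r. q \<in> Q \<Longrightarrow> r \<in> Q \<Longrightarrow>
      has_bochner_integral M (\<lambda>\<omega>. X q \<omega> * cnj (X r \<omega>)) (if q = r then complex_of_real v else 0)"
    and W: "\<And>q. q \<in> Q \<Longrightarrow> W q \<in> borel_measurable M"
      "\<And>q. q \<in> Q \<Longrightarrow> integrable M (\<lambda>\<omega>. (cmod (W q \<omega>))\<^sup>2)"
  shows "has_bochner_integral M (\<lambda>\<omega>. (cmod (\<Sum>q\<in>Q. W q \<omega> * X q \<omega>))\<^sup>2)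
           (v * (\<Sum>q\<in>Q. \<integral>\<omega>. (cmod (W q \<omega>))\<^sup>2 \<partial>M))"
proof -
  have expand: "complex_of_real ((cmod (\<Sum>q\<in>Q. W q \<omega> * X q \<omega>))\<^sup>2) =
      (\<Sum>q\<in>Q. \<Sum>r\<in>Q. X q \<omega> * cnj (X r \<omega>) * (W q \<omega> * cnj (W r \<omega>)))" for \<omega>
    by (simp only: complex_norm_square) (simp add: sum_distrib_left sum_distrib_right mult_ac, rule sum.swap)
  have "has_bochner_integral M (\<lambda>\<omega>. X q \<omega> * cnj (X r \<omega>) * (W q \<omega> * cnj (W r \<omega>)))
      ((if q = r then complex_of_real v else 0) * (\<integral>\<omega>. W q \<omega> * cnj (W r \<omega>) \<partial>M))"
    if "q \<in> Q" "r \<in> Q" for q r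
  proof -
    have X': "integrable M (\<lambda>\<omega>. X q \<omega> * cnj (X r \<omega>))"
      using X[OF that] by (simp add: has_bochner_integral_iff)
    have W': "integrable M (\<lambda>\<omega>. W q \<omega> * cnj (W r \<omega>))"
      using W that by (intro integrable_mult_cnj_square_integrable) auto
    show ?thesis
      using indep_var_integrable[OF indep[OF that] X' W'] indep_var_lebesgue_integral[OF indep[OF that] X' W']
        X[OF that] by (simp add: has_bochner_integral_iff)
  qed
  then have "has_bochner_integral M (\<lambda>\<omega>. complex_of_real ((cmod (\<Sum>q\<in>Q. W q \<omega> * X q \<omega>))\<^sup>2))
      (\<Sum>q\<in>Q. \<Sum>r\<in>Q. (if q = r then complex_of_real v else 0) * (\<integral>\<omega>. W q \<omega> * cnj (W r \<omega>) \<partial>M))"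
    unfolding expand by (intro has_bochner_integral_sum) auto
  also have "(\<Sum>q\<in>Q. \<Sum>r\<in>Q. (if q = r then complex_of_real v else 0) * (\<integral>\<omega>. W q \<omega> * cnj (W r \<omega>) \<partial>M))
      = complex_of_real (v * (\<Sum>q\<in>Q. \<integral>\<omega>. (cmod (W q \<omega>))\<^sup>2 \<partial>M))"
  proof -
    have "(\<integral>\<omega>. W q \<omega> * cnj (W q \<omega>) \<partial>M) = complex_of_real (\<integral>\<omega>. (cmod (W q \<omega>))\<^sup>2 \<partial>M)" for q
      by (simp only: complex_norm_square[symmetric] integral_complex_of_real)
    then show ?thesis
      using \<open>finite Q\<close> by (simp add: if_distrib[of "\<lambda>x. x * _"] sum_distrib_left cong: if_cong)
  qed
  finally show ?thesis
    by (auto dest: has_bochner_integral_Re)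
qed

lemma (in prob_space) sigma_sets_vimage_comp_subset:
  assumes "X \<in> measurable M MX" "f \<in> measurable MX N"
  shows "sigma_sets (space M) {(\<lambda>\<omega>. f (X \<omega>)) -` A \<inter> space M | A. A \<in> sets N} \<subseteq>
         sigma_sets (space M) {X -` A \<inter> space M | A. A \<in> sets MX}"
proof (rule sigma_sets_subseteq, safe)
  fix A
  assume "A \<in> sets N"
  then have "f -` A \<inter> space MX \<in> sets MX"
    using assms(2) by (simp add: measurable_sets)
  moreover have "(\<lambda>\<omega>. f (X \<omega>)) -` A \<inter> space M = X -` (f -` A \<inter> space MX) \<inter> space M"
    using assms(1) by (auto simp: measurable_def)
  ultimately show "\<exists>B. (\<lambda>\<omega>. f (X \<omega>)) -` A \<inter> space M = X -` B \<inter> space M \<and> B \<in> sets MX"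
    by blast
qed

lemma (in prob_space) indep_var_compose_indep_set:
  assumes "indep_set (sigma_sets (space M) {X -` A \<inter> space M | A. A \<in> sets MX})
                     (sigma_sets (space M) {Y -` A \<inter> space M | A. A \<in> sets MY})"
    and X: "X \<in> measurable M MX" and Y: "Y \<in> measurable M MY"
    and f: "f \<in> measurable MX N" and h: "h \<in> measurable MY N"
  shows "indep_var N (\<lambda>\<omega>. f (X \<omega>)) N (\<lambda>\<omega>. h (Y \<omega>))"
  unfolding indep_var_eq
proof (intro conjI)
  show "random_variable N (\<lambda>\<omega>. f (X \<omega>))" "random_variable N (\<lambda>\<omega>. h (Y \<omega>))"
    using measurable_compose[OF X f] measurable_compose[OF Y h] by simp_all
  show "indep_set (sigma_sets (space M) {(\<lambda>\<omega>. f (X \<omega>)) -` A \<inter> space M |A. A \<in> sets N})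
      (sigma_sets (space M) {(\<lambda>\<omega>. h (Y \<omega>)) -` A \<inter> space M |A. A \<in> sets N})"
    using assms(1) unfolding indep_set_def
    by (rule indep_sets_mono_sets)
      (auto split: bool.split intro: sigma_sets_vimage_comp_subset[OF X f, THEN subsetD]
        sigma_sets_vimage_comp_subset[OF Y h, THEN subsetD])
qed

section \<open>The interference term\<close>

lemma square_cmod_of_real_mult:
  "(cmod (complex_of_real r * (complex_of_real x + \<i> * complex_of_real y)))\<^sup>2 = r\<^sup>2 * (x\<^sup>2 + y\<^sup>2)"
  by (simp add: cmod_power2 power_mult_distrib algebra_simps)

lemma sum_split_halves:
  fixes f :: "nat \<Rightarrow> 'b::comm_monoid_add"
  shows "(\<Sum>i=1..2*N. f i) = (\<Sum>n=1..N. f n + f (n + N))"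
proof -
  have "(\<Sum>i=1..2*N. f i) = (\<Sum>i=1..N. f i) + (\<Sum>i=N+1..N+N. f i)"
    unfolding mult_2 by (rule sum.ub_add_nat) simp
  also have "(\<Sum>i=N+1..N+N. f i) = (\<Sum>i=1..N. f (i + N))"
    using sum.shift_bounds_cl_nat_ivl[of f 1 N N] by (simp add: add.commute)
  finally show ?thesis
    by (simp add: sum.distrib)
qed

locale interference_model = prob_space P
  for P :: "'a measure"
    and K N :: nat and S :: "nat set"
    and s2 \<beta>bar :: real and \<beta> p :: "nat \<Rightarrow> real"
    and \<theta> :: "nat \<Rightarrow> nat \<Rightarrow> 'a \<Rightarrow> real"
    and c :: "nat \<Rightarrow> 'a \<Rightarrow> nat"
    and g :: "nat \<Rightarrow> nat \<Rightarrow> nat \<Rightarrow> 'a \<Rightarrow> complex" +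
  assumes finite_S: "finite S"
    and K_pos: "K > 0" and s2_pos: "s2 > 0" and \<beta>bar_pos: "\<beta>bar > 0"
    and \<beta>_nonneg: "\<And>m. m \<in> S \<Longrightarrow> \<beta> m \<ge> 0"
    and p_nonneg: "\<And>m. m \<in> S \<Longrightarrow> p m \<ge> 0"
    and \<theta>_measurable: "\<And>m i. m \<in> S \<Longrightarrow> i \<in> {1..2*N} \<Longrightarrow> \<theta> m i \<in> borel_measurable P"
    and \<theta>_square_integrable:
      "\<And>m i. m \<in> S \<Longrightarrow> i \<in> {1..2*N} \<Longrightarrow> integrable P (\<lambda>\<omega>. (\<theta> m i \<omega>)\<^sup>2)"
    and c_measurable: "\<And>m. m \<in> S \<Longrightarrow> c m \<in> measurable P (count_space UNIV)"
    and g_cn: "\<And>m k n. m \<in> S \<Longrightarrow> k \<in> {1..K} \<Longrightarrow> n \<in> {1..N} \<Longrightarrow>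
      distributed P lborel (g m k n) (cn_density s2)"
    and g_indep: "indep_vars (\<lambda>_. borel) (\<lambda>(m, k, n). g m k n) (S \<times> {1..K} \<times> {1..N})"
    and channels_indep_data: "indep_set
      (sigma_sets (space P)
        {(\<lambda>\<omega>. restrict (\<lambda>(m, k, n). g m k n \<omega>) (S \<times> {1..K} \<times> {1..N})) -` A \<inter> space P
          | A. A \<in> sets (PiM (S \<times> {1..K} \<times> {1..N}) (\<lambda>_. borel))})
      (sigma_sets (space P)
        {(\<lambda>\<omega>. (restrict (\<lambda>(m, i). \<theta> m i \<omega>) (S \<times> {1..2*N}), restrict (\<lambda>m. c m \<omega>) S)) -` A \<inter> space P
          | A. A \<in> sets ((PiM (S \<times> {1..2*N}) (\<lambda>_. borel)) \<Otimes>\<^sub>M (PiM S (\<lambda>_. count_space UNIV)))})"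
begin

abbreviation channel_space :: "(nat \<times> nat \<times> nat \<Rightarrow> complex) measure" where
  "channel_space \<equiv> PiM (S \<times> {1..K} \<times> {1..N}) (\<lambda>_. borel)"

abbreviation data_space :: "((nat \<times> nat \<Rightarrow> real) \<times> (nat \<Rightarrow> nat)) measure" where
  "data_space \<equiv> PiM (S \<times> {1..2*N}) (\<lambda>_. borel) \<Otimes>\<^sub>M PiM S (\<lambda>_. count_space UNIV)"

definition channels :: "'a \<Rightarrow> nat \<times> nat \<times> nat \<Rightarrow> complex" where
  "channels \<omega> = restrict (\<lambda>(m, k, n). g m k n \<omega>) (S \<times> {1..K} \<times> {1..N})"

definition data :: "'a \<Rightarrow> (nat \<times> nat \<Rightarrow> real) \<times> (nat \<Rightarrow> nat)" where
  "data \<omega> = (restrict (\<lambda>(m, i). \<theta> m i \<omega>) (S \<times> {1..2*N}), restrict (\<lambda>m. c m \<omega>) S)"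

lemma g_measurable: "m \<in> S \<Longrightarrow> k \<in> {1..K} \<Longrightarrow> n \<in> {1..N} \<Longrightarrow> g m k n \<in> borel_measurable P"
  using distributed_measurable[OF g_cn] by simp

lemma measurable_channels: "channels \<in> measurable P channel_space"
  unfolding channels_def by (rule measurable_restrict) (auto intro: g_measurable)

lemma measurable_data: "data \<in> measurable P data_space"
  unfolding data_def
  by (intro measurable_Pair measurable_restrict) (auto intro: \<theta>_measurable c_measurable)

lemma indep_var_channels_data:
  assumes "f \<in> borel_measurable channel_space" "h \<in> borel_measurable data_space"
  shows "indep_var borel (\<lambda>\<omega>. f (channels \<omega>)) borel (\<lambda>\<omega>. h (data \<omega>))"
proof (rule indep_var_compose_indep_set[OF _ measurable_channels measurable_data assms])
  show "indep_set (sigma_sets (space P) {channels -` A \<inter> space P |A. A \<in> sets channel_space})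
      (sigma_sets (space P) {data -` A \<inter> space P |A. A \<in> sets data_space})"
    using channels_indep_data by (simp only: channels_def[abs_def] data_def[abs_def])
qed


lemma channels_apply: "m \<in> S \<Longrightarrow> k \<in> {1..K} \<Longrightarrow> n \<in> {1..N} \<Longrightarrow> channels \<omega> (m, k, n) = g m k n \<omega>"
  by (simp add: channels_def)

lemma data_apply:
  "m \<in> S \<Longrightarrow> i \<in> {1..2*N} \<Longrightarrow> fst (data \<omega>) (m, i) = \<theta> m i \<omega>"
  "m \<in> S \<Longrightarrow> snd (data \<omega>) m = c m \<omega>"
  by (simp_all add: data_def)

definition interferers :: "(nat \<times> nat \<times> nat) set" where
  "interferers = (SIGMA m:S. (S - {m}) \<times> {1..K})"

lemma finite_interferers: "finite interferers"
  using finite_S by (simp add: interferers_def)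

lemma sum_interferers:
  "(\<Sum>q\<in>interferers. h q) = (\<Sum>m\<in>S. \<Sum>m'\<in>S - {m}. \<Sum>k=1..K. h (m, m', k))"
proof -
  have "(\<Sum>m\<in>S. \<Sum>q\<in>(S - {m}) \<times> {1..K}. h (m, q)) = (\<Sum>q\<in>interferers. h q)"
    using finite_S by (subst sum.Sigma) (auto simp: interferers_def)
  then show ?thesis
    by (simp add: sum.cartesian_product case_prod_beta)
qed

definition channel_gain :: "nat \<Rightarrow> nat \<times> nat \<times> nat \<Rightarrow> (nat \<times> nat \<times> nat \<Rightarrow> complex) \<Rightarrow> complex" where
  "channel_gain n q x = (case q of (m, m', k) \<Rightarrow> cnj (x (m, k, n)) * x (m', k, n))"

definition total_weight :: "(nat \<times> nat \<Rightarrow> real) \<times> (nat \<Rightarrow> nat) \<Rightarrow> real" where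
  "total_weight t = (\<Sum>m\<in>S. p m * real (snd t m))"

definition data_weight :: "nat \<Rightarrow> nat \<times> nat \<times> nat \<Rightarrow> (nat \<times> nat \<Rightarrow> real) \<times> (nat \<Rightarrow> nat) \<Rightarrow> complex" where
  "data_weight n q t = (case q of (m, m', k) \<Rightarrow>
     complex_of_real (sqrt (\<beta> m * \<beta> m') / (real K * s2 * \<beta>bar) * (p m' * real (snd t m') / total_weight t)) *
     (complex_of_real (fst t (m', n)) + \<i> * complex_of_real (fst t (m', n + N))))"

lemma total_weight_data: "total_weight (data \<omega>) = Ctot S p c \<omega>"
  unfolding total_weight_def Ctot_def by (intro sum.cong) (simp_all add: data_apply)

definition normalized_interference :: "nat \<Rightarrow> 'a \<Rightarrow> complex" where
  "normalized_interference n \<omega> =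
     y_int S K N \<beta> p c \<theta> g n \<omega> / complex_of_real (Ctot S p c \<omega> * s2 * \<beta>bar)"

lemma est_eq_normalized_interference:
  assumes "n \<in> {1..N}"
  shows "est S K N s2 \<beta>bar \<beta> p c \<theta> g n \<omega> = Re (normalized_interference n \<omega>)"
    and "est S K N s2 \<beta>bar \<beta> p c \<theta> g (n + N) \<omega> = Im (normalized_interference n \<omega>)"
  using assms by (simp_all add: est_def normalized_interference_def)

lemma normalized_interference_eq_sum:
  assumes "n \<in> {1..N}"
  shows "normalized_interference n \<omega> =
    (\<Sum>q\<in>interferers. data_weight n q (data \<omega>) * channel_gain n q (channels \<omega>))"
proof -
  have "1 / of_nat K * (cnj (chan \<beta> g m k n \<omega>) * chan \<beta> g m' k n \<omega> * sym_cx N p c \<theta> m' n \<omega>) /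
      complex_of_real (Ctot S p c \<omega> * s2 * \<beta>bar) =
      data_weight n (m, m', k) (data \<omega>) * channel_gain n (m, m', k) (channels \<omega>)"
    if "m \<in> S" "m' \<in> S" "k \<in> {1..K}" for m m' k
    using that assms
    by (simp add: chan_def sym_cx_def data_weight_def channel_gain_def channels_apply data_apply
        total_weight_data real_sqrt_mult divide_inverse inverse_mult_distrib mult_ac)
  then have "normalized_interference n \<omega> =
      (\<Sum>m\<in>S. \<Sum>m'\<in>S - {m}. \<Sum>k=1..K. data_weight n (m, m', k) (data \<omega>) * channel_gain n (m, m', k) (channels \<omega>))"
    unfolding normalized_interference_def y_int_def sum_divide_distrib sum_distrib_left
    by (intro sum.cong refl) auto
  then show ?thesis
    by (simp only: sum_interferers)
qed

lemma has_bochner_integral_channel_gain_cross: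
  assumes "q \<in> interferers" "r \<in> interferers" "n \<in> {1..N}"
  shows "has_bochner_integral P (\<lambda>\<omega>. channel_gain n q (channels \<omega>) * cnj (channel_gain n r (channels \<omega>)))
           (if q = r then complex_of_real (s2\<^sup>2) else 0)"
proof -
  obtain m m' k l l' k' where q: "q = (m, m', k)" and r: "r = (l, l', k')"
    by (cases q, cases r) auto
  have in_S: "m \<in> S" "m' \<in> S" "l \<in> S" "l' \<in> S" and "m \<noteq> m'" "l \<noteq> l'"
    and in_K: "k \<in> {1..K}" "k' \<in> {1..K}"
    using assms(1,2) by (auto simp: q r interferers_def)
  have cn: "distributed P lborel ((\<lambda>(m, k, n). g m k n) i) (cn_density s2)"
    if "i \<in> S \<times> {1..K} \<times> {1..N}" for i
    using that by (auto intro: g_cn)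
  have mem: "(m, k, n) \<in> S \<times> {1..K} \<times> {1..N}" "(m', k, n) \<in> S \<times> {1..K} \<times> {1..N}"
    "(l, k', n) \<in> S \<times> {1..K} \<times> {1..N}" "(l', k', n) \<in> S \<times> {1..K} \<times> {1..N}"
    and neq: "(m, k, n) \<noteq> (m', k, n)" "(l, k', n) \<noteq> (l', k', n)"
    using in_S in_K assms(3) \<open>m \<noteq> m'\<close> \<open>l \<noteq> l'\<close> by auto
  have gain: "channel_gain n q (channels \<omega>) * cnj (channel_gain n r (channels \<omega>)) =
      cnj (g m k n \<omega>) * g m' k n \<omega> * cnj (cnj (g l k' n \<omega>) * g l' k' n \<omega>)" for \<omega>
    using in_S in_K assms(3) by (simp add: q r channel_gain_def channels_apply)
  have "((m, k, n) = (l, k', n) \<and> (m', k, n) = (l', k', n)) \<longleftrightarrow> q = r"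
    by (auto simp: q r)
  then show ?thesis
    using has_bochner_integral_indep_cn_cross_moment[OF g_indep cn s2_pos mem neq, unfolded prod.case]
    by (simp only: gain of_real_power)
qed

lemma measurable_channel_gain:
  assumes "q \<in> interferers" "n \<in> {1..N}"
  shows "channel_gain n q \<in> borel_measurable channel_space"
proof -
  obtain m m' k where q: "q = (m, m', k)" "m \<in> S" "m' \<in> S" "k \<in> {1..K}"
    using assms(1) by (auto simp: interferers_def)
  have "(m, k, n) \<in> S \<times> {1..K} \<times> {1..N}" "(m', k, n) \<in> S \<times> {1..K} \<times> {1..N}"
    using q assms(2) by auto
  then show ?thesis
    unfolding channel_gain_def q(1) prod.case by measurable
qed

lemma measurable_data_weight:
  assumes "q \<in> interferers" "n \<in> {1..N}"
  shows "data_weight n q \<in> borel_measurable data_space"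
proof -
  obtain m m' k where q: "q = (m, m', k)" "m' \<in> S"
    using assms(1) by (auto simp: interferers_def)
  have count: "(\<lambda>t. real (snd t m)) \<in> borel_measurable data_space" if "m \<in> S" for m
  proof -
    have "(\<lambda>t. snd t m) \<in> measurable data_space (count_space UNIV)"
      using that by measurable
    then show ?thesis
      by (rule measurable_compose) simp
  qed
  have [measurable]: "total_weight \<in> borel_measurable data_space"
    unfolding total_weight_def by (intro borel_measurable_sum borel_measurable_times borel_measurable_const count)
  have [measurable]: "(\<lambda>t. real (snd t m')) \<in> borel_measurable data_space"
    using q(2) by (rule count)
  have "(m', n) \<in> S \<times> {1..2*N}" "(m', n + N) \<in> S \<times> {1..2*N}"
    using q assms(2) by auto
  then show ?thesis
    unfolding data_weight_def q(1) prod.case by measurable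
qed


lemma square_norm_data_weight_le:
  assumes "(m, m', k) \<in> interferers" "n \<in> {1..N}"
  shows "(cmod (data_weight n (m, m', k) (data \<omega>)))\<^sup>2 \<le>
    \<beta> m * \<beta> m' / (real K * s2 * \<beta>bar)\<^sup>2 * ((\<theta> m' n \<omega>)\<^sup>2 + (\<theta> m' (n + N) \<omega>)\<^sup>2)"
proof -
  have m: "m \<in> S" "m' \<in> S" and i: "n \<in> {1..2*N}" "n + N \<in> {1..2*N}"
    using assms by (auto simp: interferers_def)
  define share where "share = p m' * real (c m' \<omega>) / Ctot S p c \<omega>"
  have "0 \<le> p m' * real (c m' \<omega>)"
    using p_nonneg[OF m(2)] by simp
  moreover have "p m' * real (c m' \<omega>) \<le> Ctot S p c \<omega>"
    unfolding Ctot_def using finite_S m p_nonneg by (intro member_le_sum) auto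
  ultimately have "0 \<le> share" "share \<le> 1"
    by (cases "Ctot S p c \<omega> = 0"; simp add: share_def divide_le_eq_1)+
  then have "share\<^sup>2 \<le> 1"
    by (rule power_le_one)
  have "data_weight n (m, m', k) (data \<omega>) =
      complex_of_real (sqrt (\<beta> m * \<beta> m') / (real K * s2 * \<beta>bar) * share) *
      (complex_of_real (\<theta> m' n \<omega>) + \<i> * complex_of_real (\<theta> m' (n + N) \<omega>))"
    using m i by (simp add: data_weight_def data_apply total_weight_data share_def)
  then have "(cmod (data_weight n (m, m', k) (data \<omega>)))\<^sup>2 =
      (sqrt (\<beta> m * \<beta> m') / (real K * s2 * \<beta>bar) * share)\<^sup>2 *
      ((\<theta> m' n \<omega>)\<^sup>2 + (\<theta> m' (n + N) \<omega>)\<^sup>2)"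
    by (simp only: square_cmod_of_real_mult)
  also have "\<dots> = \<beta> m * \<beta> m' / (real K * s2 * \<beta>bar)\<^sup>2 *
      (share\<^sup>2 * ((\<theta> m' n \<omega>)\<^sup>2 + (\<theta> m' (n + N) \<omega>)\<^sup>2))"
    using \<beta>_nonneg[OF m(1)] \<beta>_nonneg[OF m(2)] by (simp add: power_mult_distrib power_divide)
  also have "\<dots> \<le> \<beta> m * \<beta> m' / (real K * s2 * \<beta>bar)\<^sup>2 * ((\<theta> m' n \<omega>)\<^sup>2 + (\<theta> m' (n + N) \<omega>)\<^sup>2)"
    using \<open>share\<^sup>2 \<le> 1\<close> \<beta>_nonneg[OF m(1)] \<beta>_nonneg[OF m(2)]
    by (intro mult_left_mono mult_left_le_one_le) auto
  finally show ?thesis .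
qed

lemma square_norm_data_weight_integrable:
  assumes "q \<in> interferers" "n \<in> {1..N}"
  shows "integrable P (\<lambda>\<omega>. (cmod (data_weight n q (data \<omega>)))\<^sup>2)"
proof -
  obtain m m' k where q: "q = (m, m', k)" and "m' \<in> S"
    using assms(1) by (auto simp: interferers_def)
  then have "integrable P (\<lambda>\<omega>. \<beta> m * \<beta> m' / (real K * s2 * \<beta>bar)\<^sup>2 *
      ((\<theta> m' n \<omega>)\<^sup>2 + (\<theta> m' (n + N) \<omega>)\<^sup>2))"
    using assms(2) by (intro integrable_mult_right Bochner_Integration.integrable_add \<theta>_square_integrable) auto
  then show ?thesis
  proof (rule Bochner_Integration.integrable_bound)
    show "(\<lambda>\<omega>. (cmod (data_weight n q (data \<omega>)))\<^sup>2) \<in> borel_measurable P"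
      using measurable_compose[OF measurable_data measurable_data_weight[OF assms]] by measurable
    show "AE \<omega> in P. norm ((cmod (data_weight n q (data \<omega>)))\<^sup>2) \<le>
        norm (\<beta> m * \<beta> m' / (real K * s2 * \<beta>bar)\<^sup>2 * ((\<theta> m' n \<omega>)\<^sup>2 + (\<theta> m' (n + N) \<omega>)\<^sup>2))"
    proof (rule AE_I2)
      fix \<omega>
      show "norm ((cmod (data_weight n q (data \<omega>)))\<^sup>2) \<le>
          norm (\<beta> m * \<beta> m' / (real K * s2 * \<beta>bar)\<^sup>2 * ((\<theta> m' n \<omega>)\<^sup>2 + (\<theta> m' (n + N) \<omega>)\<^sup>2))"
        using square_norm_data_weight_le[OF assms[unfolded q]]
        unfolding real_norm_def abs_power2 q by (meson abs_ge_self order_trans)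
    qed
  qed
qed

definition interference_bound :: "nat \<Rightarrow> real" where
  "interference_bound n = (\<Sum>m\<in>S. \<Sum>m'\<in>S - {m}. \<beta> m * \<beta> m' / (real K * \<beta>bar\<^sup>2) *
     (expectation (\<lambda>\<omega>. (\<theta> m' n \<omega>)\<^sup>2) + expectation (\<lambda>\<omega>. (\<theta> m' (n + N) \<omega>)\<^sup>2)))"

lemma normalized_interference_second_moment:
  assumes "n \<in> {1..N}"
  shows "has_bochner_integral P (\<lambda>\<omega>. (cmod (normalized_interference n \<omega>))\<^sup>2)
    (s2\<^sup>2 * (\<Sum>q\<in>interferers. expectation (\<lambda>\<omega>. (cmod (data_weight n q (data \<omega>)))\<^sup>2)))"
  unfolding normalized_interference_eq_sum[OF assms]
proof (rule has_bochner_integral_square_norm_indep_orthogonal_sum[OF finite_interferers])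
  fix q r
  assume qr: "q \<in> interferers" "r \<in> interferers"
  show "indep_var borel (\<lambda>\<omega>. channel_gain n q (channels \<omega>) * cnj (channel_gain n r (channels \<omega>)))
      borel (\<lambda>\<omega>. data_weight n q (data \<omega>) * cnj (data_weight n r (data \<omega>)))"
  proof (rule indep_var_channels_data)
    note [measurable] = measurable_channel_gain[OF qr(1) assms] measurable_channel_gain[OF qr(2) assms]
      measurable_data_weight[OF qr(1) assms] measurable_data_weight[OF qr(2) assms]
    show "(\<lambda>x. channel_gain n q x * cnj (channel_gain n r x)) \<in> borel_measurable channel_space"
      by measurable
    show "(\<lambda>t. data_weight n q t * cnj (data_weight n r t)) \<in> borel_measurable data_space"
      by measurable
  qed
  show "has_bochner_integral P (\<lambda>\<omega>. channel_gain n q (channels \<omega>) * cnj (channel_gain n r (channels \<omega>)))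
      (if q = r then complex_of_real (s2\<^sup>2) else 0)"
    using qr assms by (rule has_bochner_integral_channel_gain_cross)
next
  fix q
  assume "q \<in> interferers"
  with assms show "(\<lambda>\<omega>. data_weight n q (data \<omega>)) \<in> borel_measurable P"
    by (intro measurable_compose[OF measurable_data measurable_data_weight])
  from \<open>q \<in> interferers\<close> assms show "integrable P (\<lambda>\<omega>. (cmod (data_weight n q (data \<omega>)))\<^sup>2)"
    by (rule square_norm_data_weight_integrable)
qed

lemma normalized_interference_second_moment_le:
  assumes "n \<in> {1..N}"
  shows "expectation (\<lambda>\<omega>. (cmod (normalized_interference n \<omega>))\<^sup>2) \<le> interference_bound n"
proof -
  let ?E = "\<lambda>m'. expectation (\<lambda>\<omega>. (\<theta> m' n \<omega>)\<^sup>2) + expectation (\<lambda>\<omega>. (\<theta> m' (n + N) \<omega>)\<^sup>2)"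
  have "expectation (\<lambda>\<omega>. (cmod (data_weight n (m, m', k) (data \<omega>)))\<^sup>2) \<le>
      \<beta> m * \<beta> m' / (real K * s2 * \<beta>bar)\<^sup>2 * ?E m'"
    if "(m, m', k) \<in> interferers" for m m' k
  proof -
    have "m' \<in> S"
      using that by (auto simp: interferers_def)
    then have "integrable P (\<lambda>\<omega>. (\<theta> m' n \<omega>)\<^sup>2)" "integrable P (\<lambda>\<omega>. (\<theta> m' (n + N) \<omega>)\<^sup>2)"
      using assms by (auto intro: \<theta>_square_integrable)
    then have "expectation (\<lambda>\<omega>. (cmod (data_weight n (m, m', k) (data \<omega>)))\<^sup>2) \<le>
        expectation (\<lambda>\<omega>. \<beta> m * \<beta> m' / (real K * s2 * \<beta>bar)\<^sup>2 *
          ((\<theta> m' n \<omega>)\<^sup>2 + (\<theta> m' (n + N) \<omega>)\<^sup>2))"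
      using square_norm_data_weight_le[OF that assms] square_norm_data_weight_integrable[OF that assms]
      by (intro integral_mono) auto
    also have "\<dots> = \<beta> m * \<beta> m' / (real K * s2 * \<beta>bar)\<^sup>2 * ?E m'"
      using \<open>integrable P (\<lambda>\<omega>. (\<theta> m' n \<omega>)\<^sup>2)\<close> \<open>integrable P (\<lambda>\<omega>. (\<theta> m' (n + N) \<omega>)\<^sup>2)\<close>
      by simp
    finally show ?thesis .
  qed
  then have "s2\<^sup>2 * (\<Sum>q\<in>interferers. expectation (\<lambda>\<omega>. (cmod (data_weight n q (data \<omega>)))\<^sup>2)) \<le>
      s2\<^sup>2 * (\<Sum>m\<in>S. \<Sum>m'\<in>S - {m}. \<Sum>k=1..K. \<beta> m * \<beta> m' / (real K * s2 * \<beta>bar)\<^sup>2 * ?E m')"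
    unfolding sum_interferers by (intro mult_left_mono sum_mono) (auto simp: interferers_def)
  also have "\<dots> = (\<Sum>m\<in>S. \<Sum>m'\<in>S - {m}. s2\<^sup>2 * (real K * (\<beta> m * \<beta> m' / (real K * s2 * \<beta>bar)\<^sup>2 * ?E m')))"
    by (simp add: sum_distrib_left)
  also have "\<dots> = interference_bound n"
    unfolding interference_bound_def using K_pos s2_pos \<beta>bar_pos
    by (intro sum.cong refl) (simp add: power2_eq_square mult_ac)
  finally show ?thesis
    using normalized_interference_second_moment[OF assms] by (simp add: has_bochner_integral_iff)
qed


lemma measurable_normalized_interference:
  assumes "n \<in> {1..N}"
  shows "normalized_interference n \<in> borel_measurable P"
proof -
  have "normalized_interference n =
      (\<lambda>\<omega>. \<Sum>q\<in>interferers. data_weight n q (data \<omega>) * channel_gain n q (channels \<omega>))"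
    using normalized_interference_eq_sum[OF assms] by blast
  also have "\<dots> \<in> borel_measurable P"
    using measurable_compose[OF measurable_data measurable_data_weight[OF _ assms]]
      measurable_compose[OF measurable_channels measurable_channel_gain[OF _ assms]]
    by (intro borel_measurable_sum borel_measurable_times) auto
  finally show ?thesis .
qed

lemma nn_integral_est_square_le:
  assumes "n \<in> {1..N}"
  shows "(\<integral>\<^sup>+\<omega>. ennreal ((est S K N s2 \<beta>bar \<beta> p c \<theta> g n \<omega>)\<^sup>2) \<partial>P) +
      (\<integral>\<^sup>+\<omega>. ennreal ((est S K N s2 \<beta>bar \<beta> p c \<theta> g (n + N) \<omega>)\<^sup>2) \<partial>P)
    \<le> ennreal (interference_bound n)"
proof -
  note [measurable] = measurable_normalized_interference[OF assms]
  have "(\<integral>\<^sup>+\<omega>. ennreal ((est S K N s2 \<beta>bar \<beta> p c \<theta> g n \<omega>)\<^sup>2) \<partial>P) +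
      (\<integral>\<^sup>+\<omega>. ennreal ((est S K N s2 \<beta>bar \<beta> p c \<theta> g (n + N) \<omega>)\<^sup>2) \<partial>P) =
      (\<integral>\<^sup>+\<omega>. ennreal ((Re (normalized_interference n \<omega>))\<^sup>2) + ennreal ((Im (normalized_interference n \<omega>))\<^sup>2) \<partial>P)"
    unfolding est_eq_normalized_interference[OF assms] by (rule nn_integral_add[symmetric]) auto
  also have "\<dots> = (\<integral>\<^sup>+\<omega>. ennreal ((cmod (normalized_interference n \<omega>))\<^sup>2) \<partial>P)"
    by (intro nn_integral_cong) (simp add: cmod_power2)
  also have "\<dots> = ennreal (expectation (\<lambda>\<omega>. (cmod (normalized_interference n \<omega>))\<^sup>2))"
    using normalized_interference_second_moment[OF assms]
    by (intro nn_integral_eq_integral) (auto simp: has_bochner_integral_iff)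
  also have "\<dots> \<le> ennreal (interference_bound n)"
    using normalized_interference_second_moment_le[OF assms] by (rule ennreal_leI)
  finally show ?thesis .
qed

lemma interference_bound_nonneg: "0 \<le> interference_bound n"
  unfolding interference_bound_def using \<beta>_nonneg K_pos
  by (intro sum_nonneg mult_nonneg_nonneg divide_nonneg_nonneg add_nonneg_nonneg integral_nonneg_AE) auto

lemma sum_interference_bound:
  "(\<Sum>n=1..N. interference_bound n) = (\<Sum>m\<in>S. \<Sum>m'\<in>S - {m}.
     \<beta> m * \<beta> m' / (real K * \<beta>bar\<^sup>2) * expectation (\<lambda>\<omega>. \<Sum>i=1..2*N. (\<theta> m' i \<omega>)\<^sup>2))"
proof -
  have "expectation (\<lambda>\<omega>. \<Sum>i=1..2*N. (\<theta> m' i \<omega>)\<^sup>2) = (\<Sum>i=1..2*N. expectation (\<lambda>\<omega>. (\<theta> m' i \<omega>)\<^sup>2))"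
    if "m' \<in> S" for m'
    using that \<theta>_square_integrable by (intro Bochner_Integration.integral_sum) auto
  then have "expectation (\<lambda>\<omega>. \<Sum>i=1..2*N. (\<theta> m' i \<omega>)\<^sup>2) =
      (\<Sum>n=1..N. expectation (\<lambda>\<omega>. (\<theta> m' n \<omega>)\<^sup>2) + expectation (\<lambda>\<omega>. (\<theta> m' (n + N) \<omega>)\<^sup>2))"
    if "m' \<in> S" for m'
    using that by (simp only: sum_split_halves)
  then show ?thesis
    unfolding interference_bound_def
    by (subst sum.swap, subst sum.swap) (simp add: sum_distrib_left)
qed

end

theorem lemma5:
  fixes P :: "'a measure"
    and M K N :: nat and S :: "nat set"
    and s2 \<beta>bar :: real and \<beta> p :: "nat \<Rightarrow> real"
    and \<theta> :: "nat \<Rightarrow> nat \<Rightarrow> 'a \<Rightarrow> real"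
    and c :: "nat \<Rightarrow> 'a \<Rightarrow> nat"
    and g :: "nat \<Rightarrow> nat \<Rightarrow> nat \<Rightarrow> 'a \<Rightarrow> complex"
  assumes "prob_space P"
    and "M \<ge> 1" "K \<ge> 1" "N \<ge> 1"
    and "S \<subseteq> {1..M}" "S \<noteq> {}"
    and "s2 > 0" "\<beta>bar > 0" "\<And>m. m \<in> S \<Longrightarrow> \<beta> m > 0"
    and "\<And>m. m \<in> S \<Longrightarrow> p m > 0"
    and "\<And>m i. m \<in> S \<Longrightarrow> i \<in> {1..2*N} \<Longrightarrow> \<theta> m i \<in> borel_measurable P"
    and "\<And>m i. m \<in> S \<Longrightarrow> i \<in> {1..2*N} \<Longrightarrow> integrable P (\<lambda>\<omega>. (\<theta> m i \<omega>)\<^sup>2)"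
    and "\<And>m. m \<in> S \<Longrightarrow> c m \<in> measurable P (count_space UNIV)"
    and "\<And>m \<omega>. m \<in> S \<Longrightarrow> \<omega> \<in> space P \<Longrightarrow> c m \<omega> \<ge> 1"
    and "\<And>m k n. m \<in> S \<Longrightarrow> k \<in> {1..K} \<Longrightarrow> n \<in> {1..N} \<Longrightarrow>
           distributed P lborel (g m k n) (cn_density s2)"
    and "prob_space.indep_vars P (\<lambda>_. borel) (\<lambda>(m, k, n). g m k n) (S \<times> {1..K} \<times> {1..N})"
    and "prob_space.indep_set P
           (sigma_sets (space P)
              {(\<lambda>\<omega>. restrict (\<lambda>(m, k, n). g m k n \<omega>) (S \<times> {1..K} \<times> {1..N})) -` A \<inter> space P
                | A. A \<in> sets (PiM (S \<times> {1..K} \<times> {1..N}) (\<lambda>_. borel))})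
           (sigma_sets (space P)
              {(\<lambda>\<omega>. (restrict (\<lambda>(m, i). \<theta> m i \<omega>) (S \<times> {1..2*N}), restrict (\<lambda>m. c m \<omega>) S)) -` A \<inter> space P
                | A. A \<in> sets ((PiM (S \<times> {1..2*N}) (\<lambda>_. borel)) \<Otimes>\<^sub>M (PiM S (\<lambda>_. count_space UNIV)))})"
  shows "(\<Sum>n=1..2*N. \<integral>\<^sup>+ \<omega>. ennreal ((est S K N s2 \<beta>bar \<beta> p c \<theta> g n \<omega>)\<^sup>2) \<partial>P)
         \<le> ennreal (\<Sum>m\<in>S. \<Sum>m'\<in>S - {m}.
               \<beta> m * \<beta> m' / (real K * \<beta>bar\<^sup>2) *
               prob_space.expectation P (\<lambda>\<omega>. \<Sum>i=1..2*N. (\<theta> m' i \<omega>)\<^sup>2))"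
proof -
  interpret interference_model P K N S s2 \<beta>bar \<beta> p \<theta> c g
  proof (intro interference_model.intro interference_model_axioms.intro)
    show "finite S"
      using \<open>S \<subseteq> {1..M}\<close> by (rule finite_subset) simp
  qed (use assms in \<open>auto intro: less_imp_le\<close>)
  have "(\<Sum>n=1..2*N. \<integral>\<^sup>+ \<omega>. ennreal ((est S K N s2 \<beta>bar \<beta> p c \<theta> g n \<omega>)\<^sup>2) \<partial>P) =
      (\<Sum>n=1..N. (\<integral>\<^sup>+ \<omega>. ennreal ((est S K N s2 \<beta>bar \<beta> p c \<theta> g n \<omega>)\<^sup>2) \<partial>P) +
        (\<integral>\<^sup>+ \<omega>. ennreal ((est S K N s2 \<beta>bar \<beta> p c \<theta> g (n + N) \<omega>)\<^sup>2) \<partial>P))"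
    by (rule sum_split_halves)
  also have "\<dots> \<le> (\<Sum>n=1..N. ennreal (interference_bound n))"
    by (intro sum_mono nn_integral_est_square_le)
  also have "\<dots> = ennreal (\<Sum>n=1..N. interference_bound n)"
    using interference_bound_nonneg by (simp add: sum_ennreal)
  finally show ?thesis
    unfolding sum_interference_bound .
qed

end
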